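(* Let $(\Gamma,\rho)$ be a rooted voltage graph with finite voltage group $G$, let $V_r$ be the set of roots of $\Gamma$, and let $(\Gamma_r,\rho_r)$ be the voltage graph induced by $V_r$ (i.e. $\Gamma_r$ is the subgraph of $\Gamma$ induced by $V_r$ and $\rho_r$ the restriction of $\rho$ to its edges). Then for every $v_i\in V_r$, the local group of $(\Gamma_r,\rho_r)$ at $v_i$ equals the directed local group $G_i^*$ of $(\Gamma,\rho)$ at $v_i$.
   Context: $\Gamma=(V,E)$ simple digraph, $e_{ij}$ the edge $v_i\to v_j$, $\rho:E\to G$. Semi-walk $w=v_{i_1}a_1\dots a_{n-1}v_{i_n}$ with each $a_j\in\{e_{i_ji_{j+1}},e_{i_{j+1}i_j}\}$; walk if all $a_j=e_{i_ji_{j+1}}$; closed if $v_{i_1}=v_{i_n}$; path: walk with distinct vertices. Net voltage $f(w)=\bar\rho(a_1)\cdots\bar\rho(a_{n-1})$ with $\bar\rho(a_j)=\rho(a_j)$ for forward and $\rho(a_j)^{-1}$ for backward edges ($f=\mathbf 1$ on a single vertex). The local group of a voltage graph at $v_i$ is $\{f(w): w$ closed semi-walk at $v_i$ in that graph$\}$; the directed local group $G_i^*$ of $(\Gamma,\rho)$ is $\{f(w): w$ closed walk in $\Gamma$ at $v_i\}$. A root of $\Gamma$ is a vertex reachable by a path from every vertex; $\Gamma$ is rooted if it has a root. The induced subgraph on $V_r$ contains exactly the edges of $\Gamma$ between vertices of $V_r$. *)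

theory Defs
  imports "HOL-Algebra.Group"
begin

(* Parallel edges are impossible by
   construction; both e_ij and e_ji may be present. *)
definition simple_digraph :: "'v set \<Rightarrow> ('v \<times> 'v) set \<Rightarrow> bool" where
  "simple_digraph V E \<longleftrightarrow> finite V \<and> E \<subseteq> V \<times> V \<and> (\<forall>v. (v, v) \<notin> E)"

definition voltage_graph :: "('g, 'b) monoid_scheme \<Rightarrow> 'v set \<Rightarrow> ('v \<times> 'v) set \<Rightarrow> ('v \<times> 'v \<Rightarrow> 'g) \<Rightarrow> bool" where
  "voltage_graph G V E \<rho> \<longleftrightarrow> group G \<and> simple_digraph V E \<and> (\<forall>e\<in>E. \<rho> e \<in> carrier G)"

(* A semi-walk v_{i_1} a_1 ... a_{n-1} v_{i_n} is encoded by the vertex list vs = [v_{i_1},...,v_{i_n}]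
   (n >= 1) and a direction list ds of length n-1: ds!j = True means a_j is the forward edge
   e_{i_j i_{j+1}}, ds!j = False means a_j is the backward edge e_{i_{j+1} i_j}. *)
definition semi_walk :: "'v set \<Rightarrow> ('v \<times> 'v) set \<Rightarrow> 'v list \<Rightarrow> bool list \<Rightarrow> bool" where
  "semi_walk V E vs ds \<longleftrightarrow> vs \<noteq> [] \<and> set vs \<subseteq> V \<and> length ds = length vs - 1 \<and>
     (\<forall>j < length ds. if ds ! j then (vs ! j, vs ! Suc j) \<in> E else (vs ! Suc j, vs ! j) \<in> E)"

definition walk :: "'v set \<Rightarrow> ('v \<times> 'v) set \<Rightarrow> 'v list \<Rightarrow> bool list \<Rightarrow> bool" where
  "walk V E vs ds \<longleftrightarrow> semi_walk V E vs ds \<and> (\<forall>j < length ds. ds ! j)"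

definition closed_at :: "'v list \<Rightarrow> 'v \<Rightarrow> bool" where
  "closed_at vs v \<longleftrightarrow> vs \<noteq> [] \<and> hd vs = v \<and> last vs = v"

definition is_path :: "'v set \<Rightarrow> ('v \<times> 'v) set \<Rightarrow> 'v list \<Rightarrow> bool list \<Rightarrow> bool" where
  "is_path V E vs ds \<longleftrightarrow> walk V E vs ds \<and> distinct vs"

definition net_voltage :: "('g, 'b) monoid_scheme \<Rightarrow> ('v \<times> 'v \<Rightarrow> 'g) \<Rightarrow> 'v list \<Rightarrow> bool list \<Rightarrow> 'g" where
  "net_voltage G \<rho> vs ds =
     foldr (\<lambda>a b. a \<otimes>\<^bsub>G\<^esub> b)
       (map (\<lambda>j. if ds ! j then \<rho> (vs ! j, vs ! Suc j) else inv\<^bsub>G\<^esub> (\<rho> (vs ! Suc j, vs ! j)))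
            [0..<length ds])
       \<one>\<^bsub>G\<^esub>"

definition local_group :: "('g, 'b) monoid_scheme \<Rightarrow> 'v set \<Rightarrow> ('v \<times> 'v) set \<Rightarrow> ('v \<times> 'v \<Rightarrow> 'g) \<Rightarrow> 'v \<Rightarrow> 'g set" where
  "local_group G V E \<rho> v = {net_voltage G \<rho> vs ds | vs ds. semi_walk V E vs ds \<and> closed_at vs v}"

definition directed_local_group :: "('g, 'b) monoid_scheme \<Rightarrow> 'v set \<Rightarrow> ('v \<times> 'v) set \<Rightarrow> ('v \<times> 'v \<Rightarrow> 'g) \<Rightarrow> 'v \<Rightarrow> 'g set" where
  "directed_local_group G V E \<rho> v = {net_voltage G \<rho> vs ds | vs ds. walk V E vs ds \<and> closed_at vs v}"

definition is_root :: "'v set \<Rightarrow> ('v \<times> 'v) set \<Rightarrow> 'v \<Rightarrow> bool" where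
  "is_root V E r \<longleftrightarrow> r \<in> V \<and> (\<forall>v\<in>V. \<exists>vs ds. is_path V E vs ds \<and> hd vs = v \<and> last vs = r)"

definition rooted :: "'v set \<Rightarrow> ('v \<times> 'v) set \<Rightarrow> bool" where
  "rooted V E \<longleftrightarrow> (\<exists>r. is_root V E r)"

definition roots :: "'v set \<Rightarrow> ('v \<times> 'v) set \<Rightarrow> 'v set" where
  "roots V E = {r. is_root V E r}"

definition induced_edges :: "('v \<times> 'v) set \<Rightarrow> 'v set \<Rightarrow> ('v \<times> 'v) set" where
  "induced_edges E W = E \<inter> (W \<times> W)"

end

theory Submission
  imports Defs "HOL-Algebra.Multiplicative_Group" "HOL-Library.Transitive_Closure_Table"
begin

text \<open>
  Every closed walk at a root stays among the roots, because the roots are closed under forward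
  reachability; so the directed local group of \<open>\<Gamma>\<close> at a root is that of the induced graph
  \<open>\<Gamma>\<^sub>r\<close>. The graph \<open>\<Gamma>\<^sub>r\<close> is strongly connected, and in a strongly connected graph with a finite
  voltage group a backward edge \<open>w \<rightarrow> u\<close> can be traded for a forward walk: if \<open>h\<close> is the net
  voltage of a walk from \<open>u\<close> to \<open>w\<close> and \<open>a\<close> the voltage of the edge, then
  \<open>a\<^sup>-\<^sup>1 = h (a h)\<^sup>N\<^sup>-\<^sup>1\<close> with \<open>N = |G|\<close>, and \<open>h (a h)\<^sup>N\<^sup>-\<^sup>1\<close> is the voltage of a walk from \<open>u\<close> to \<open>w\<close>.
  Hence local group and directed local group of \<open>\<Gamma>\<^sub>r\<close> coincide.
\<close>

lemma net_voltage_singleton [simp]: "net_voltage G \<rho> [x] [] = \<one>\<^bsub>G\<^esub>"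
  by (simp add: net_voltage_def)

lemma net_voltage_Cons [simp]:
  "net_voltage G \<rho> (x # y # vs) (d # ds) =
     (if d then \<rho> (x, y) else inv\<^bsub>G\<^esub> \<rho> (y, x)) \<otimes>\<^bsub>G\<^esub> net_voltage G \<rho> (y # vs) ds"
proof -
  have "[0..<length (d # ds)] = 0 # map Suc [0..<length ds]"
    by (simp only: length_Cons upt_conv_Cons[OF zero_less_Suc] map_Suc_upt)
  then show ?thesis
    unfolding net_voltage_def by (simp add: o_def cong: if_cong del: upt_Suc)
qed

lemma semi_walk_singleton: "semi_walk V E [x] ds \<longleftrightarrow> x \<in> V \<and> ds = []"
  unfolding semi_walk_def by auto

lemma semi_walk_Cons:
  "semi_walk V E (x # y # vs) (d # ds) \<longleftrightarrow>
     x \<in> V \<and> (if d then (x, y) \<in> E else (y, x) \<in> E) \<and> semi_walk V E (y # vs) ds"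
  unfolding semi_walk_def by (auto simp: All_less_Suc2)

lemma walk_singleton: "walk V E [x] ds \<longleftrightarrow> x \<in> V \<and> ds = []"
  unfolding walk_def semi_walk_def by auto

lemma walk_Cons:
  "walk V E (x # y # vs) (d # ds) \<longleftrightarrow> d \<and> x \<in> V \<and> (x, y) \<in> E \<and> walk V E (y # vs) ds"
  unfolding walk_def semi_walk_def by (auto simp: All_less_Suc2)

lemma walk_mono: "walk W E' vs ds \<Longrightarrow> W \<subseteq> V \<Longrightarrow> E' \<subseteq> E \<Longrightarrow> walk V E vs ds"
  unfolding walk_def semi_walk_def by auto

lemma walk_nth_reachable: "walk V E vs ds \<Longrightarrow> k < length vs \<Longrightarrow> (hd vs, vs ! k) \<in> E\<^sup>*"
proof (induction k)
  case 0
  then show ?case by (cases vs) auto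
next
  case (Suc k)
  then have "(vs ! k, vs ! Suc k) \<in> E"
    unfolding walk_def semi_walk_def by auto
  with Suc show ?case
    by (meson Suc_lessD rtrancl.rtrancl_into_rtrancl)
qed

lemma rtrancl_path_imp_walk:
  assumes "rtrancl_path (\<lambda>a b. (a, b) \<in> E) x xs y" and "x \<in> V" and "E \<subseteq> V \<times> V"
  shows "walk V E (x # xs) (replicate (length xs) True) \<and> last (x # xs) = y"
  using assms by (induction rule: rtrancl_path.induct) (auto simp: walk_singleton walk_Cons)

lemma is_root_iff_rtrancl:
  assumes "E \<subseteq> V \<times> V"
  shows "is_root V E r \<longleftrightarrow> r \<in> V \<and> (\<forall>w\<in>V. (w, r) \<in> E\<^sup>*)"
proof
  assume root: "is_root V E r"
  have "(w, r) \<in> E\<^sup>*" if "w \<in> V" for w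
  proof -
    from root \<open>w \<in> V\<close> obtain vs ds where "walk V E vs ds" "hd vs = w" "last vs = r"
      unfolding is_root_def is_path_def by blast
    moreover have "vs \<noteq> []"
      using \<open>walk V E vs ds\<close> unfolding walk_def semi_walk_def by auto
    ultimately show ?thesis
      using walk_nth_reachable[of V E vs ds "length vs - 1"] by (simp add: last_conv_nth)
  qed
  with root show "r \<in> V \<and> (\<forall>w\<in>V. (w, r) \<in> E\<^sup>*)"
    unfolding is_root_def by blast
next
  assume reach: "r \<in> V \<and> (\<forall>w\<in>V. (w, r) \<in> E\<^sup>*)"
  have "\<exists>vs ds. is_path V E vs ds \<and> hd vs = w \<and> last vs = r" if "w \<in> V" for w
  proof -
    from reach \<open>w \<in> V\<close> have "(\<lambda>a b. (a, b) \<in> E)\<^sup>*\<^sup>* w r"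
      by (simp add: rtranclp_rtrancl_eq)
    then obtain xs where "rtrancl_path (\<lambda>a b. (a, b) \<in> E) w xs r"
      using rtranclp_eq_rtrancl_path by metis
    then obtain xs' where "rtrancl_path (\<lambda>a b. (a, b) \<in> E) w xs' r" "distinct (w # xs')"
      by (rule rtrancl_path_distinct)
    with rtrancl_path_imp_walk[OF _ \<open>w \<in> V\<close> assms] show ?thesis
      unfolding is_path_def by fastforce
  qed
  with reach show "is_root V E r"
    unfolding is_root_def by blast
qed

lemma walk_in_induced_subgraph:
  assumes walk: "walk V E vs ds" and start: "hd vs \<in> W"
    and closed: "\<And>x y. x \<in> W \<Longrightarrow> (x, y) \<in> E\<^sup>* \<Longrightarrow> y \<in> W"
  shows "walk W (induced_edges E W) vs ds"
proof -
  have in_W: "vs ! k \<in> W" if "k < length vs" for k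
    using closed[OF start walk_nth_reachable[OF walk that]] .
  then have "set vs \<subseteq> W"
    by (auto simp: in_set_conv_nth)
  moreover have "Suc j < length vs" if "j < length ds" for j
    using walk that unfolding walk_def semi_walk_def by auto
  ultimately show ?thesis
    using walk in_W unfolding walk_def semi_walk_def induced_edges_def by auto
qed

inductive walk_voltage for G :: "('g, 'b) monoid_scheme" and \<rho> :: "'v \<times> 'v \<Rightarrow> 'g" and W E
where
  walk_voltage_refl: "u \<in> W \<Longrightarrow> walk_voltage G \<rho> W E u \<one>\<^bsub>G\<^esub> u"
| walk_voltage_step: "(u, w) \<in> E \<Longrightarrow> u \<in> W \<Longrightarrow> walk_voltage G \<rho> W E w g x \<Longrightarrow>
    walk_voltage G \<rho> W E u (\<rho> (u, w) \<otimes>\<^bsub>G\<^esub> g) x"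

lemma walk_voltage_imp_walk:
  "walk_voltage G \<rho> W E u g x \<Longrightarrow>
     \<exists>vs ds. walk W E vs ds \<and> hd vs = u \<and> last vs = x \<and> net_voltage G \<rho> vs ds = g"
proof (induction rule: walk_voltage.induct)
  case (walk_voltage_refl u)
  then show ?case
    by (intro exI[of _ "[u]"] exI[of _ "[]"]) (simp add: walk_singleton)
next
  case (walk_voltage_step u w g x)
  then obtain vs ds where vs: "walk W E vs ds" "hd vs = w" "last vs = x" "net_voltage G \<rho> vs ds = g"
    by blast
  then obtain rest where "vs = w # rest"
    unfolding walk_def semi_walk_def by (cases vs) auto
  with vs walk_voltage_step.hyps show ?case
    by (intro exI[of _ "u # vs"] exI[of _ "True # ds"]) (auto simp: walk_Cons)
qed

lemma walk_voltage_start: "walk_voltage G \<rho> W E u g x \<Longrightarrow> u \<in> W"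
  by (induction rule: walk_voltage.induct) auto

lemma rtrancl_imp_walk_voltage:
  assumes "(u, x) \<in> E\<^sup>*" and "x \<in> W" and "E \<subseteq> W \<times> W"
  shows "\<exists>g. walk_voltage G \<rho> W E u g x"
  using assms(1)
proof (induction rule: converse_rtrancl_induct)
  case base
  show ?case
    using walk_voltage_refl[OF assms(2)] by blast
next
  case (step u w)
  then obtain g where "walk_voltage G \<rho> W E w g x"
    by blast
  moreover have "u \<in> W"
    using step(1) assms(3) by blast
  ultimately show ?case
    using step(1) by (blast intro: walk_voltage_step)
qed

context group
begin

lemma walk_voltage_closed:
  "walk_voltage G \<rho> W E u g x \<Longrightarrow> \<rho> ` E \<subseteq> carrier G \<Longrightarrow> g \<in> carrier G"
  by (induction rule: walk_voltage.induct) auto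

lemma walk_voltage_trans:
  assumes "walk_voltage G \<rho> W E u g x" and "walk_voltage G \<rho> W E x h y"
    and "\<rho> ` E \<subseteq> carrier G"
  shows "walk_voltage G \<rho> W E u (g \<otimes> h) y"
  using assms
proof (induction rule: walk_voltage.induct)
  case (walk_voltage_refl u)
  moreover have "h \<in> carrier G"
    using walk_voltage_closed[OF walk_voltage_refl.prems] .
  ultimately show ?case by simp
next
  case (walk_voltage_step u w g x)
  have "\<rho> (u, w) \<in> carrier G"
    using walk_voltage_step.hyps(1) walk_voltage_step.prems(2) by blast
  moreover have "g \<in> carrier G"
    using walk_voltage_closed[OF walk_voltage_step.hyps(3) walk_voltage_step.prems(2)] .
  moreover have "h \<in> carrier G"
    using walk_voltage_closed[OF walk_voltage_step.prems] .
  ultimately have "\<rho> (u, w) \<otimes> g \<otimes> h = \<rho> (u, w) \<otimes> (g \<otimes> h)"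
    by (rule m_assoc)
  with walk_voltage_step show ?case
    by (metis walk_voltage.walk_voltage_step)
qed

lemma walk_voltage_pow:
  assumes "walk_voltage G \<rho> W E u c u" and "\<rho> ` E \<subseteq> carrier G"
  shows "walk_voltage G \<rho> W E u (c [^] (n::nat)) u"
proof (induction n)
  case 0
  then show ?case
    using walk_voltage_refl[OF walk_voltage_start[OF assms(1)]] by simp
next
  case (Suc n)
  then show ?case
    using walk_voltage_trans[OF Suc assms(1,2)] by simp
qed

lemma inv_eq_mult_pow_order:
  assumes "finite (carrier G)" and "a \<in> carrier G" and "h \<in> carrier G"
  shows "inv a = h \<otimes> (a \<otimes> h) [^] (order G - 1)"
proof -
  have "order G > 0"
    using assms(1) by (auto simp: order_def card_gt_0_iff)
  then have "a \<otimes> (h \<otimes> (a \<otimes> h) [^] (order G - 1)) = (a \<otimes> h) [^] order G"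
    using assms(2,3) by (metis Suc_diff_1 m_assoc m_closed nat_pow_Suc2 nat_pow_closed)
  also have "\<dots> = \<one>"
    using assms(2,3) by (simp add: pow_order_eq_1)
  finally show ?thesis
    using assms(2,3) by (metis inv_comm inv_equality m_closed nat_pow_closed)
qed

lemma walk_voltage_inv_edge:
  assumes "finite (carrier G)" and "\<rho> ` E \<subseteq> carrier G" and "E \<subseteq> W \<times> W"
    and strong: "\<forall>a\<in>W. \<forall>b\<in>W. (a, b) \<in> E\<^sup>*"
    and edge: "(w, u) \<in> E"
  shows "walk_voltage G \<rho> W E u (inv \<rho> (w, u)) w"
proof -
  have "w \<in> W" "(u, w) \<in> E\<^sup>*"
    using edge \<open>E \<subseteq> W \<times> W\<close> strong by auto
  then obtain h where h: "walk_voltage G \<rho> W E u h w"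
    using rtrancl_imp_walk_voltage \<open>E \<subseteq> W \<times> W\<close> by metis
  have "walk_voltage G \<rho> W E w (\<rho> (w, u) \<otimes> h) w"
    using edge \<open>w \<in> W\<close> h by (rule walk_voltage_step)
  then have "walk_voltage G \<rho> W E u (h \<otimes> (\<rho> (w, u) \<otimes> h) [^] (order G - 1)) w"
    using h assms(2) by (metis walk_voltage_trans walk_voltage_pow)
  moreover have "inv \<rho> (w, u) = h \<otimes> (\<rho> (w, u) \<otimes> h) [^] (order G - 1)"
    using edge assms(2) by (intro inv_eq_mult_pow_order assms(1) walk_voltage_closed[OF h]) auto
  ultimately show ?thesis by simp
qed

lemma semi_walk_imp_walk_voltage:
  assumes "finite (carrier G)" and "\<rho> ` E \<subseteq> carrier G" and "E \<subseteq> W \<times> W"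
    and "\<forall>a\<in>W. \<forall>b\<in>W. (a, b) \<in> E\<^sup>*"
  shows "semi_walk W E vs ds \<Longrightarrow> walk_voltage G \<rho> W E (hd vs) (net_voltage G \<rho> vs ds) (last vs)"
proof (induction ds arbitrary: vs)
  case Nil
  then obtain x where "vs = [x]"
    unfolding semi_walk_def by (cases vs) auto
  with Nil show ?case
    by (auto simp: semi_walk_singleton intro: walk_voltage_refl)
next
  case (Cons d ds)
  then obtain x y rest where vs: "vs = x # y # rest"
    unfolding semi_walk_def by (cases vs; cases "tl vs") auto
  with Cons.prems have x: "x \<in> W" and edge: "if d then (x, y) \<in> E else (y, x) \<in> E"
    and tail: "semi_walk W E (y # rest) ds"
    by (auto simp: semi_walk_Cons)
  from Cons.IH[OF tail] have IH: "walk_voltage G \<rho> W E y (net_voltage G \<rho> (y # rest) ds) (last vs)"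
    by (simp add: vs)
  show ?case
  proof (cases d)
    case True
    with edge x IH show ?thesis
      by (simp add: vs walk_voltage_step)
  next
    case False
    with edge have "walk_voltage G \<rho> W E x (inv \<rho> (y, x)) y"
      using walk_voltage_inv_edge assms by metis
    from walk_voltage_trans[OF this IH assms(2)] False show ?thesis
      by (simp add: vs)
  qed
qed

lemma local_group_eq_directed_local_group:
  assumes "finite (carrier G)" and "\<rho> ` E \<subseteq> carrier G" and "E \<subseteq> W \<times> W"
    and "\<forall>a\<in>W. \<forall>b\<in>W. (a, b) \<in> E\<^sup>*"
  shows "local_group G W E \<rho> v = directed_local_group G W E \<rho> v"
proof
  show "local_group G W E \<rho> v \<subseteq> directed_local_group G W E \<rho> v"
  proof
    fix g assume "g \<in> local_group G W E \<rho> v"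
    then obtain vs ds where "semi_walk W E vs ds" "closed_at vs v" "g = net_voltage G \<rho> vs ds"
      unfolding local_group_def by blast
    then have "walk_voltage G \<rho> W E v g v"
      using semi_walk_imp_walk_voltage[OF assms] unfolding closed_at_def by metis
    then obtain ws es where "walk W E ws es" "hd ws = v" "last ws = v" "net_voltage G \<rho> ws es = g"
      using walk_voltage_imp_walk by metis
    moreover have "ws \<noteq> []"
      using \<open>walk W E ws es\<close> unfolding walk_def semi_walk_def by blast
    ultimately show "g \<in> directed_local_group G W E \<rho> v"
      unfolding directed_local_group_def closed_at_def by blast
  qed
  show "directed_local_group G W E \<rho> v \<subseteq> local_group G W E \<rho> v"
    unfolding local_group_def directed_local_group_def walk_def by blast
qed

end

lemma directed_local_group_induced:
  assumes "W \<subseteq> V" and closed: "\<And>x y. x \<in> W \<Longrightarrow> (x, y) \<in> E\<^sup>* \<Longrightarrow> y \<in> W" and "v \<in> W"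
  shows "directed_local_group G W (induced_edges E W) \<rho> v = directed_local_group G V E \<rho> v"
proof
  show "directed_local_group G W (induced_edges E W) \<rho> v \<subseteq> directed_local_group G V E \<rho> v"
  proof
    fix g assume "g \<in> directed_local_group G W (induced_edges E W) \<rho> v"
    then obtain vs ds where vs: "walk W (induced_edges E W) vs ds" "closed_at vs v"
      and g: "g = net_voltage G \<rho> vs ds"
      unfolding directed_local_group_def by blast
    have "walk V E vs ds"
      using vs(1) \<open>W \<subseteq> V\<close> by (rule walk_mono) (simp add: induced_edges_def)
    with vs(2) g show "g \<in> directed_local_group G V E \<rho> v"
      unfolding directed_local_group_def by blast
  qed
  show "directed_local_group G V E \<rho> v \<subseteq> directed_local_group G W (induced_edges E W) \<rho> v"
  proof
    fix g assume "g \<in> directed_local_group G V E \<rho> v"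
    then obtain vs ds where vs: "walk V E vs ds" "closed_at vs v" and g: "g = net_voltage G \<rho> vs ds"
      unfolding directed_local_group_def by blast
    have "walk W (induced_edges E W) vs ds"
      using vs(1) by (rule walk_in_induced_subgraph)
        (use vs(2) \<open>v \<in> W\<close> closed in \<open>auto simp: closed_at_def\<close>)
    with vs(2) g show "g \<in> directed_local_group G W (induced_edges E W) \<rho> v"
      unfolding directed_local_group_def by blast
  qed
qed

lemma roots_reachable_closed:
  assumes "E \<subseteq> V \<times> V" and "r \<in> roots V E" and "(r, x) \<in> E\<^sup>*"
  shows "x \<in> roots V E"
proof -
  have "x \<in> V" using assms(3) assms(1,2)
    by (induction rule: rtrancl_induct) (auto simp: roots_def is_root_def)
  with assms show ?thesis
    by (auto simp: roots_def is_root_iff_rtrancl intro: rtrancl_trans)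
qed

lemma roots_strongly_connected:
  assumes "E \<subseteq> V \<times> V" and "a \<in> roots V E" and "b \<in> roots V E"
  shows "(a, b) \<in> (induced_edges E (roots V E))\<^sup>*"
proof -
  have "(a, b) \<in> E\<^sup>*"
    using assms(2,3) is_root_iff_rtrancl[OF assms(1)] unfolding roots_def by blast
  then show ?thesis
  proof (induction rule: rtrancl_induct)
    case base
    then show ?case by simp
  next
    case (step x y)
    have "x \<in> roots V E"
      using roots_reachable_closed[OF assms(1,2) step(1)] .
    moreover have "y \<in> roots V E"
      using roots_reachable_closed[OF assms(1,2) rtrancl_into_rtrancl[OF step(1,2)]] .
    ultimately have "(x, y) \<in> induced_edges E (roots V E)"
      using step(2) unfolding induced_edges_def by blast
    with step.IH show ?case by (rule rtrancl_into_rtrancl)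
  qed
qed

text \<open>The hypothesis \<open>rooted V E\<close> is implied by \<open>v \<in> roots V E\<close> and not used.\<close>

theorem lemma8:
  fixes G :: "('g, 'b) monoid_scheme" and V :: "'v set" and E :: "('v \<times> 'v) set"
    and \<rho> :: "'v \<times> 'v \<Rightarrow> 'g" and v :: 'v
  assumes "voltage_graph G V E \<rho>"
    and "finite (carrier G)"
    and "rooted V E"
    and "v \<in> roots V E"
  shows "local_group G (roots V E) (induced_edges E (roots V E)) \<rho> v
         = directed_local_group G V E \<rho> v"
proof -
  let ?R = "roots V E"
  interpret group G
    using assms(1) unfolding voltage_graph_def by blast
  have EV: "E \<subseteq> V \<times> V" and "\<rho> ` E \<subseteq> carrier G"
    using assms(1) unfolding voltage_graph_def simple_digraph_def by auto
  have "local_group G ?R (induced_edges E ?R) \<rho> v = directed_local_group G ?R (induced_edges E ?R) \<rho> v"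
  proof (rule local_group_eq_directed_local_group)
    show "\<rho> ` induced_edges E ?R \<subseteq> carrier G"
      using \<open>\<rho> ` E \<subseteq> carrier G\<close> unfolding induced_edges_def by blast
    show "induced_edges E ?R \<subseteq> ?R \<times> ?R"
      unfolding induced_edges_def by blast
    show "\<forall>a\<in>?R. \<forall>b\<in>?R. (a, b) \<in> (induced_edges E ?R)\<^sup>*"
      using roots_strongly_connected[OF EV] by blast
  qed fact
  also have "\<dots> = directed_local_group G V E \<rho> v"
  proof (rule directed_local_group_induced)
    show "?R \<subseteq> V"
      unfolding roots_def is_root_def by blast
  qed (use roots_reachable_closed[OF EV] assms(4) in auto)
  finally show ?thesis .
qed

end
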